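(* Let $K$ be a field and let $T$ be a tree with at least two edges. Then there is a monomial order such that the cut ideal $I_T$ has a quadratic squarefree Gröbner basis. In particular, the corresponding initial ideal is squarefree.
   Context: For a finite simple graph $G$ with vertex set $V(G)$ and edge set $E(G)$, an unordered partition $A|B$ of $V(G)$ (into two sets, one of which may be empty) defines the cut $Cut(A|B)$, the set of edges with one endpoint in $A$ and the other in $B$. The cut ideal $I_G$ is the kernel of the $K$-algebra homomorphism $\phi_G: K[q_{A|B} : A|B \text{ unordered partition of } V(G)] \to K[s_{ij}, t_{ij} : \{i,j\} \in E(G)]$, $q_{A|B} \mapsto \prod_{\{i,j\}\in Cut(A|B)} s_{ij} \prod_{\{i,j\}\in E(G)\setminus Cut(A|B)} t_{ij}$. A squarefree Gröbner basis is a Gröbner basis consisting of binomials, each a difference of two squarefree monomials; quadratic means each binomial has degree two. *)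

theory Defs
  imports Main "HOL-Library.Poly_Mapping"
begin

definition simple_graph :: "'a set \<Rightarrow> 'a set set \<Rightarrow> bool" where
  "simple_graph V E \<longleftrightarrow> finite V \<and>
     (\<forall>e\<in>E. \<exists>u v. u \<noteq> v \<and> u \<in> V \<and> v \<in> V \<and> e = {u, v})"

definition adj :: "'a set set \<Rightarrow> 'a \<Rightarrow> 'a \<Rightarrow> bool" where
  "adj E u v \<longleftrightarrow> {u, v} \<in> E"

definition graph_connected :: "'a set \<Rightarrow> 'a set set \<Rightarrow> bool" where
  "graph_connected V E \<longleftrightarrow>
     (\<forall>u\<in>V. \<forall>v\<in>V. (u, v) \<in> {(x, y). adj E x y}\<^sup>*)"

definition has_cycle :: "'a set set \<Rightarrow> bool" where
  "has_cycle E \<longleftrightarrow> (\<exists>vs. length vs \<ge> 3 \<and> distinct vs \<and>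
      (\<forall>i. Suc i < length vs \<longrightarrow> adj E (vs ! i) (vs ! Suc i)) \<and>
      adj E (last vs) (hd vs))"

definition is_tree :: "'a set \<Rightarrow> 'a set set \<Rightarrow> bool" where
  "is_tree V E \<longleftrightarrow> simple_graph V E \<and> V \<noteq> {} \<and> graph_connected V E \<and> \<not> has_cycle E"

text \<open>The unordered partition A|B of V (B = V - A, one part possibly empty)
  is represented by the set {A, B}.\<close>
definition unordered_partitions :: "'a set \<Rightarrow> 'a set set set" where
  "unordered_partitions V = {{A, V - A} | A. A \<subseteq> V}"

definition cut_edges :: "'a set set \<Rightarrow> 'a set set \<Rightarrow> 'a set set" where
  "cut_edges E P = {e \<in> E. \<forall>X\<in>P. e \<inter> X \<noteq> {}}"

type_synonym ('v, 'k) mpoly = "('v \<Rightarrow>\<^sub>0 nat) \<Rightarrow>\<^sub>0 'k"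

definition monom :: "('v \<Rightarrow>\<^sub>0 nat) \<Rightarrow> ('v, 'k::comm_ring_1) mpoly" where
  "monom m = Poly_Mapping.single m 1"

definition const :: "'k \<Rightarrow> ('v, 'k::comm_ring_1) mpoly" where
  "const c = Poly_Mapping.single 0 c"

definition poly_ring :: "'v set \<Rightarrow> ('v, 'k::comm_ring_1) mpoly set" where
  "poly_ring Q = {p. \<forall>m\<in>Poly_Mapping.keys p. Poly_Mapping.keys m \<subseteq> Q}"

definition ideal_gen :: "'r::comm_ring_1 set \<Rightarrow> 'r set" where
  "ideal_gen S = {p. \<exists>F c. finite F \<and> F \<subseteq> S \<and> p = (\<Sum>g\<in>F. c g * g)}"

definition squarefree_monomial :: "('v \<Rightarrow>\<^sub>0 nat) \<Rightarrow> bool" where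
  "squarefree_monomial m \<longleftrightarrow> (\<forall>x. Poly_Mapping.lookup m x \<le> 1)"

definition monomial_degree :: "('v \<Rightarrow>\<^sub>0 nat) \<Rightarrow> nat" where
  "monomial_degree m = (\<Sum>x\<in>Poly_Mapping.keys m. Poly_Mapping.lookup m x)"

definition monomial_order_on :: "'v set \<Rightarrow> (('v \<Rightarrow>\<^sub>0 nat) \<Rightarrow> ('v \<Rightarrow>\<^sub>0 nat) \<Rightarrow> bool) \<Rightarrow> bool" where
  "monomial_order_on Q le \<longleftrightarrow>
     (let M = {m. Poly_Mapping.keys m \<subseteq> Q} in
       (\<forall>a\<in>M. le a a) \<and>
       (\<forall>a\<in>M. \<forall>b\<in>M. le a b \<and> le b a \<longrightarrow> a = b) \<and>
       (\<forall>a\<in>M. \<forall>b\<in>M. \<forall>c\<in>M. le a b \<and> le b c \<longrightarrow> le a c) \<and>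
       (\<forall>a\<in>M. \<forall>b\<in>M. le a b \<or> le b a) \<and>
       (\<forall>a\<in>M. \<forall>b\<in>M. \<forall>c\<in>M. le a b \<longrightarrow> le (a + c) (b + c)) \<and>
       (\<forall>a\<in>M. le 0 a) \<and>
       wf {(a, b). a \<in> M \<and> b \<in> M \<and> le a b \<and> a \<noteq> b})"

definition lead_monom :: "(('v \<Rightarrow>\<^sub>0 nat) \<Rightarrow> ('v \<Rightarrow>\<^sub>0 nat) \<Rightarrow> bool) \<Rightarrow> ('v, 'k::comm_ring_1) mpoly \<Rightarrow> ('v \<Rightarrow>\<^sub>0 nat)" where
  "lead_monom le p = (THE m. m \<in> Poly_Mapping.keys p \<and> (\<forall>m'\<in>Poly_Mapping.keys p. le m' m))"

definition initial_ideal :: "(('v \<Rightarrow>\<^sub>0 nat) \<Rightarrow> ('v \<Rightarrow>\<^sub>0 nat) \<Rightarrow> bool) \<Rightarrow> ('v, 'k::comm_ring_1) mpoly set \<Rightarrow> ('v, 'k) mpoly set" where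
  "initial_ideal le I = ideal_gen {monom (lead_monom le f) | f. f \<in> I \<and> f \<noteq> 0}"

definition groebner_basis :: "(('v \<Rightarrow>\<^sub>0 nat) \<Rightarrow> ('v \<Rightarrow>\<^sub>0 nat) \<Rightarrow> bool) \<Rightarrow> ('v, 'k::comm_ring_1) mpoly set \<Rightarrow> ('v, 'k) mpoly set \<Rightarrow> bool" where
  "groebner_basis le G I \<longleftrightarrow> finite G \<and> G \<subseteq> I \<and>
     ideal_gen {monom (lead_monom le g) | g. g \<in> G \<and> g \<noteq> 0} = initial_ideal le I"

definition quadratic_squarefree_binomials :: "('v, 'k::comm_ring_1) mpoly set \<Rightarrow> bool" where
  "quadratic_squarefree_binomials G \<longleftrightarrow>
     (\<forall>g\<in>G. \<exists>u v. u \<noteq> v \<and> squarefree_monomial u \<and> squarefree_monomial v \<and>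
        monomial_degree u = 2 \<and> monomial_degree v = 2 \<and> g = monom u - monom v)"

definition squarefree_monomial_ideal :: "('v, 'k::comm_ring_1) mpoly set \<Rightarrow> bool" where
  "squarefree_monomial_ideal J \<longleftrightarrow>
     (\<exists>S. (\<forall>m\<in>S. squarefree_monomial m) \<and> J = ideal_gen (monom ` S))"

text \<open>Variables of the target ring: (e, True) is s_e, (e, False) is t_e.
  phi(q_{A|B}) = prod over cut edges of s_e times prod over non-cut edges of t_e.\<close>
definition cut_image :: "'a set set \<Rightarrow> 'a set set \<Rightarrow> ('a set \<times> bool, 'k::comm_ring_1) mpoly" where
  "cut_image E P = monom (\<Sum>e\<in>E. Poly_Mapping.single (e, e \<in> cut_edges E P) 1)"

definition cut_hom :: "'a set set \<Rightarrow> ('a set set, 'k::comm_ring_1) mpoly \<Rightarrow> ('a set \<times> bool, 'k) mpoly" where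
  "cut_hom E p = (\<Sum>m\<in>Poly_Mapping.keys p. const (Poly_Mapping.lookup p m) * (\<Prod>P\<in>Poly_Mapping.keys m. cut_image E P ^ Poly_Mapping.lookup m P))"

definition cut_ideal :: "'a set \<Rightarrow> 'a set set \<Rightarrow> ('a set set, 'k::comm_ring_1) mpoly set" where
  "cut_ideal V E = {p \<in> poly_ring (unordered_partitions V). cut_hom E p = 0}"

end

theory Submission
  imports Defs "HOL-Library.FuncSet" "HOL-Library.Transitive_Closure_Table"
begin

text \<open>In a tree every set of edges is the cut of exactly one unordered partition, so the
  partitions, ordered by inclusion of their cuts, form the Boolean lattice on \<open>E\<close>, and
  \<open>\<phi>\<^sub>T(q\<^sub>P)\<close> records which edges \<open>P\<close> cuts. Hence for partitions \<open>P, P'\<close> with incomparable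
  cuts the Hibi relation \<open>q\<^sub>P q\<^sub>P\<^sub>' - q\<^sub>R q\<^sub>R\<^sub>'\<close>, where \<open>Cut R = Cut P \<inter> Cut P'\<close> and
  \<open>Cut R' = Cut P \<union> Cut P'\<close>, lies in \<open>I\<^sub>T\<close>. Order monomials by degree, then by the weight
  \<open>\<Sum> |Cut P| (|E| - |Cut P|)\<close>, then lexicographically; by strict concavity of \<open>k (|E| - k)\<close>
  the leading term of each Hibi relation is \<open>q\<^sub>P q\<^sub>P\<^sub>'\<close>. A monomial divisible by none of these leading terms is a chain of cuts; a chain
  is determined by its image under \<open>\<phi>\<^sub>T\<close> (its largest cut is the set of edges carrying an \<open>s\<close>),
  so it is the least monomial of its fibre and cannot be the leading monomial of an element of
  the kernel.\<close>

lemma monom_add: "monom (a + b) = (monom a * monom b :: ('v, 'k::comm_ring_1) mpoly)"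
  by (simp add: monom_def mult_single)

lemma monom_zero: "monom 0 = (1 :: ('v, 'k::comm_ring_1) mpoly)"
  by (simp add: monom_def)

lemma prod_monom: "(\<Prod>i\<in>A. monom (g i)) = (monom (\<Sum>i\<in>A. g i) :: ('v, 'k::comm_ring_1) mpoly)"
proof (cases "finite A")
  case True
  then show ?thesis by (induction A rule: finite_induct) (auto simp: monom_zero monom_add)
qed (simp add: monom_zero)

lemma power_monom_sum_single:
  "(monom (\<Sum>e\<in>E. Poly_Mapping.single (f e) (1::nat)) :: ('v, 'k::comm_ring_1) mpoly) ^ k
     = monom (\<Sum>e\<in>E. Poly_Mapping.single (f e) k)"
proof (induction k)
  case 0
  then show ?case by (simp add: monom_zero)
next
  case (Suc k)
  have "(\<Sum>e\<in>E. Poly_Mapping.single (f e) (1::nat)) + (\<Sum>e\<in>E. Poly_Mapping.single (f e) k)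
        = (\<Sum>e\<in>E. Poly_Mapping.single (f e) (Suc k))"
    by (simp add: sum.distrib[symmetric] single_add[symmetric])
  then show ?case using Suc by (simp add: monom_add[symmetric])
qed

lemma keys_monom_diff:
  assumes "u \<noteq> v"
  shows "Poly_Mapping.keys (monom u - monom v :: ('v, 'k::comm_ring_1) mpoly) = {u, v}"
  using assms by (auto simp: monom_def in_keys_iff lookup_minus lookup_single when_def split: if_splits)

lemma monom_diff_nonzero:
  assumes "u \<noteq> v"
  shows "(monom u - monom v :: ('v, 'k::comm_ring_1) mpoly) \<noteq> 0"
  using keys_monom_diff[OF assms, where 'k = 'k] by auto

lemma add_diff_poly_mapping:
  assumes "\<And>k. Poly_Mapping.lookup u k \<le> Poly_Mapping.lookup (m :: 'v \<Rightarrow>\<^sub>0 nat) k"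
  shows "m = u + (m - u)"
  by (rule poly_mapping_eqI) (use assms in \<open>simp add: lookup_add lookup_minus\<close>)

lemma single_add_diff:
  "P \<in> Poly_Mapping.keys (m :: 'v \<Rightarrow>\<^sub>0 nat) \<Longrightarrow> m = Poly_Mapping.single P 1 + (m - Poly_Mapping.single P 1)"
  by (rule add_diff_poly_mapping) (auto simp: lookup_single when_def in_keys_iff)

lemma keys_diff_subset: "Poly_Mapping.keys ((m :: 'v \<Rightarrow>\<^sub>0 nat) - u) \<subseteq> Poly_Mapping.keys m"
  by (auto simp: in_keys_iff lookup_minus)

definition cut_labels :: "'a set set \<Rightarrow> 'a set set \<Rightarrow> nat \<Rightarrow> ('a set \<times> bool \<Rightarrow>\<^sub>0 nat)" where
  "cut_labels E P k = (\<Sum>e\<in>E. Poly_Mapping.single (e, e \<in> cut_edges E P) k)"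

text \<open>\<open>cut_exponent E Q m\<close> is the exponent of \<open>\<phi>\<^sub>G(q\<^sup>m)\<close> for every finite \<open>Q\<close> containing the
  variables of \<open>m\<close>.\<close>

definition cut_exponent ::
  "'a set set \<Rightarrow> 'a set set set \<Rightarrow> ('a set set \<Rightarrow>\<^sub>0 nat) \<Rightarrow> ('a set \<times> bool \<Rightarrow>\<^sub>0 nat)" where
  "cut_exponent E Q m = (\<Sum>P\<in>Q. cut_labels E P (Poly_Mapping.lookup m P))"

lemma cut_hom_eq:
  "cut_hom E (p :: ('a set set, 'k::comm_ring_1) mpoly) =
     (\<Sum>m\<in>Poly_Mapping.keys p.
        Poly_Mapping.single (cut_exponent E (Poly_Mapping.keys m) m) (Poly_Mapping.lookup p m))"
proof -
  have "(\<Prod>P\<in>Poly_Mapping.keys m. cut_image E P ^ Poly_Mapping.lookup m P)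
          = (monom (cut_exponent E (Poly_Mapping.keys m) m) :: ('a set \<times> bool, 'k) mpoly)" for m
    by (simp only: cut_image_def power_monom_sum_single prod_monom cut_exponent_def cut_labels_def)
  then show ?thesis
    by (simp add: cut_hom_def const_def monom_def mult_single)
qed

lemma lookup_cut_hom:
  "Poly_Mapping.lookup (cut_hom E (p :: ('a set set, 'k::comm_ring_1) mpoly)) w =
     (\<Sum>m\<in>Poly_Mapping.keys p.
        if cut_exponent E (Poly_Mapping.keys m) m = w then Poly_Mapping.lookup p m else 0)"
  by (simp add: cut_hom_eq lookup_sum lookup_single when_def)

lemma cut_exponent_keys:
  assumes "finite Q" "Poly_Mapping.keys m \<subseteq> Q"
  shows "cut_exponent E (Poly_Mapping.keys m) m = cut_exponent E Q m"
  unfolding cut_exponent_def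
  by (rule sum.mono_neutral_left) (use assms in \<open>auto simp: in_keys_iff cut_labels_def\<close>)

lemma cut_hom_binomial:
  "cut_hom E (monom u - monom v :: ('a set set, 'k::comm_ring_1) mpoly) =
     Poly_Mapping.single (cut_exponent E (Poly_Mapping.keys u) u) 1
     - Poly_Mapping.single (cut_exponent E (Poly_Mapping.keys v) v) 1"
proof (cases "u = v")
  case True
  then show ?thesis by (simp add: cut_hom_def)
next
  case False
  then show ?thesis
    unfolding cut_hom_eq keys_monom_diff[OF False]
    by (simp add: monom_def lookup_minus lookup_single single_uminus[symmetric])
qed

lemma ideal_gen_mono: "S \<subseteq> T \<Longrightarrow> ideal_gen S \<subseteq> ideal_gen T"
  unfolding ideal_gen_def by blast

lemma ideal_gen_mult_mem: "g \<in> S \<Longrightarrow> r * g \<in> ideal_gen S"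
  unfolding ideal_gen_def by (intro CollectI exI[of _ "{g}"] exI[of _ "\<lambda>_. r"]) simp

lemma ideal_gen_add:
  assumes "p \<in> ideal_gen S" "q \<in> ideal_gen S"
  shows "p + q \<in> ideal_gen S"
proof -
  obtain F1 c1 where 1: "finite F1" "F1 \<subseteq> S" "p = (\<Sum>g\<in>F1. c1 g * g)"
    using assms(1) unfolding ideal_gen_def by blast
  obtain F2 c2 where 2: "finite F2" "F2 \<subseteq> S" "q = (\<Sum>g\<in>F2. c2 g * g)"
    using assms(2) unfolding ideal_gen_def by blast
  define c where "c g = (if g \<in> F1 then c1 g else 0) + (if g \<in> F2 then c2 g else 0)" for g
  have "(\<Sum>g\<in>F1 \<union> F2. c g * g) =
          (\<Sum>g\<in>F1 \<union> F2. if g \<in> F1 then c1 g * g else 0) + (\<Sum>g\<in>F1 \<union> F2. if g \<in> F2 then c2 g * g else 0)"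
    unfolding sum.distrib[symmetric] by (rule sum.cong) (auto simp: c_def distrib_right)
  also have "(\<Sum>g\<in>F1 \<union> F2. if g \<in> F1 then c1 g * g else 0) = p"
    unfolding 1(3) using 1 2 by (intro sum.mono_neutral_cong_right) auto
  also have "(\<Sum>g\<in>F1 \<union> F2. if g \<in> F2 then c2 g * g else 0) = q"
    unfolding 2(3) using 1 2 by (intro sum.mono_neutral_cong_right) auto
  finally show ?thesis
    unfolding ideal_gen_def using 1 2 by (intro CollectI exI[of _ "F1 \<union> F2"] exI[of _ c]) auto
qed

lemma ideal_gen_mult:
  assumes "p \<in> ideal_gen S"
  shows "r * p \<in> ideal_gen S"
proof -
  obtain F c where F: "finite F" "F \<subseteq> S" "p = (\<Sum>g\<in>F. c g * g)"
    using assms unfolding ideal_gen_def by blast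
  then have "r * p = (\<Sum>g\<in>F. (r * c g) * g)" by (simp add: sum_distrib_left mult.assoc)
  then show ?thesis
    unfolding ideal_gen_def using F by (intro CollectI exI[of _ F] exI[of _ "\<lambda>g. r * c g"]) auto
qed

lemma ideal_gen_subset:
  assumes "T \<subseteq> ideal_gen S"
  shows "ideal_gen T \<subseteq> ideal_gen S"
proof
  fix p assume "p \<in> ideal_gen T"
  then obtain F c where F: "finite F" "F \<subseteq> T" "p = (\<Sum>g\<in>F. c g * g)"
    unfolding ideal_gen_def by blast
  have "(\<Sum>g\<in>F'. c g * g) \<in> ideal_gen S" if "finite F'" "F' \<subseteq> F" for F'
    using that
  proof (induction F' rule: finite_induct)
    case empty
    then show ?case unfolding ideal_gen_def by (intro CollectI exI[of _ "{}"]) simp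
  next
    case (insert g F')
    then show ?case using F(2) assms by (auto intro: ideal_gen_add ideal_gen_mult)
  qed
  then show "p \<in> ideal_gen S" using F by blast
qed

subsection \<open>Monomial orders from weight vectors\<close>

definition weight_lex_le ::
  "(nat \<Rightarrow> ('v \<Rightarrow>\<^sub>0 nat) \<Rightarrow> int) \<Rightarrow> ('v \<Rightarrow>\<^sub>0 nat) \<Rightarrow> ('v \<Rightarrow>\<^sub>0 nat) \<Rightarrow> bool" where
  "weight_lex_le W a b \<longleftrightarrow> a = b \<or> (\<exists>i. (\<forall>j<i. W j a = W j b) \<and> W i a < W i b)"

lemma weight_lex_le_refl: "weight_lex_le W a a"
  by (simp add: weight_lex_le_def)

lemma weight_lex_le_strictI:
  "(\<forall>j<i. W j a = W j b) \<Longrightarrow> W i a < W i b \<Longrightarrow> weight_lex_le W a b \<and> a \<noteq> b"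
  unfolding weight_lex_le_def by auto

lemma weight_lex_le_antisym:
  assumes "weight_lex_le W a b" "weight_lex_le W b a"
  shows "a = b"
proof (rule ccontr)
  assume "a \<noteq> b"
  then obtain i k where "\<forall>j<i. W j a = W j b" "W i a < W i b" "\<forall>j<k. W j b = W j a" "W k b < W k a"
    using assms by (auto simp: weight_lex_le_def)
  then show False by (cases i k rule: linorder_cases) force+
qed

lemma weight_lex_le_trans:
  assumes "weight_lex_le W a b" "weight_lex_le W b c"
  shows "weight_lex_le W a c"
proof (cases "a = b \<or> b = c")
  case False
  then obtain i k where i: "\<forall>j<i. W j a = W j b" "W i a < W i b"
    and k: "\<forall>j<k. W j b = W j c" "W k b < W k c"
    using assms by (auto simp: weight_lex_le_def)
  have "(\<forall>j<min i k. W j a = W j c) \<and> W (min i k) a < W (min i k) c"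
    using i k by (cases i k rule: linorder_cases) (auto simp: min_def)
  then show ?thesis unfolding weight_lex_le_def by blast
qed (use assms in auto)

lemma weight_lex_le_total:
  assumes "a \<noteq> b \<Longrightarrow> \<exists>i. W i a \<noteq> W i b"
  shows "weight_lex_le W a b \<or> weight_lex_le W b a"
proof (cases "a = b")
  case False
  then have ex: "\<exists>i. W i a \<noteq> W i b" using assms by blast
  define i where "i = (LEAST i. W i a \<noteq> W i b)"
  have "W i a \<noteq> W i b" unfolding i_def using LeastI_ex[OF ex] .
  moreover have "\<forall>j<i. W j a = W j b" unfolding i_def using not_less_Least by blast
  ultimately show ?thesis unfolding weight_lex_le_def by (metis linorder_neq_iff)
qed (simp add: weight_lex_le_refl)

lemma weight_lex_le_add:
  assumes "\<And>i x y. W i (x + y) = W i x + W i y" and "weight_lex_le W a b"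
  shows "weight_lex_le W (a + c) (b + c)"
  using assms unfolding weight_lex_le_def by auto

text \<open>Component 0 is the total degree and component 1 the \<open>w\<close>-weighted degree; the
  components \<open>2 + j\<close>, reading off the exponent of the \<open>j\<close>-th variable, break all ties.\<close>

definition refined_weights ::
  "'v set \<Rightarrow> (nat \<Rightarrow> 'v) \<Rightarrow> nat \<Rightarrow> ('v \<Rightarrow> int) \<Rightarrow> nat \<Rightarrow> ('v \<Rightarrow>\<^sub>0 nat) \<Rightarrow> int" where
  "refined_weights Q h n w i m =
     (if i = 0 then (\<Sum>q\<in>Q. int (Poly_Mapping.lookup m q))
      else if i = 1 then (\<Sum>q\<in>Q. int (Poly_Mapping.lookup m q) * w q)
      else if i - 2 < n then int (Poly_Mapping.lookup m (h (i - 2))) else 0)"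

lemma refined_weights_add:
  "refined_weights Q h n w i (x + y) = refined_weights Q h n w i x + refined_weights Q h n w i y"
  by (simp add: refined_weights_def lookup_add sum.distrib distrib_right)

lemma sum_lookup_single_mult:
  assumes "finite Q" "q \<in> Q"
  shows "(\<Sum>q'\<in>Q. int (Poly_Mapping.lookup (Poly_Mapping.single q 1) q') * f q') = f q"
  using assms by (subst sum.remove) (auto simp: lookup_single when_def split: if_splits intro!: sum.neutral)

lemma refined_weights_single:
  assumes "finite Q" "q \<in> Q"
  shows "refined_weights Q h n w 0 (Poly_Mapping.single q 1) = 1"
    and "refined_weights Q h n w 1 (Poly_Mapping.single q 1) = w q"
  using sum_lookup_single_mult[OF assms, of "\<lambda>_. 1"] sum_lookup_single_mult[OF assms, of w]
  by (simp_all add: refined_weights_def)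

lemma finite_monomials_degree_le:
  assumes "finite Q"
  shows "finite {a :: 'v \<Rightarrow>\<^sub>0 nat. Poly_Mapping.keys a \<subseteq> Q \<and> (\<Sum>q\<in>Q. Poly_Mapping.lookup a q) \<le> d}"
    (is "finite ?A")
proof -
  let ?f = "\<lambda>a::'v \<Rightarrow>\<^sub>0 nat. restrict (Poly_Mapping.lookup a) Q"
  have "?f ` ?A \<subseteq> PiE Q (\<lambda>_. {..d})"
  proof
    fix x assume "x \<in> ?f ` ?A"
    then obtain a where a: "a \<in> ?A" "x = ?f a" by blast
    have "Poly_Mapping.lookup a q \<le> d" if "q \<in> Q" for q
      using a(1) member_le_sum[of q Q "Poly_Mapping.lookup a"] assms that by fastforce
    then show "x \<in> PiE Q (\<lambda>_. {..d})" using a(2) by (simp add: restrict_PiE_iff)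
  qed
  then have "finite (?f ` ?A)" by (rule finite_subset) (intro finite_PiE assms finite_atMost)
  moreover have "inj_on ?f ?A"
  proof
    fix a b assume ab: "a \<in> ?A" "b \<in> ?A" "?f a = ?f b"
    show "a = b"
    proof (rule poly_mapping_eqI)
      fix k show "Poly_Mapping.lookup a k = Poly_Mapping.lookup b k"
      proof (cases "k \<in> Q")
        case True
        then show ?thesis using ab(3) by (metis restrict_apply')
      next
        case False
        then have "Poly_Mapping.lookup a k = 0" "Poly_Mapping.lookup b k = 0"
          using ab(1,2) by (auto simp: in_keys_iff)
        then show ?thesis by simp
      qed
    qed
  qed
  ultimately show ?thesis by (rule finite_imageD)
qed

lemma wf_if_finite_predecessors:
  assumes "trans R" and "\<And>a. (a, a) \<notin> R" and "\<And>b. finite {a. (a, b) \<in> R}"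
  shows "wf R"
proof -
  have "R \<subseteq> inv_image less_than (\<lambda>b. card {a. (a, b) \<in> R})"
  proof clarify
    fix a b assume "(a, b) \<in> R"
    then have "{c. (c, a) \<in> R} \<subset> {c. (c, b) \<in> R}"
      using assms(1,2) unfolding trans_def by blast
    then show "(a, b) \<in> inv_image less_than (\<lambda>b. card {a. (a, b) \<in> R})"
      using assms(3) psubset_card_mono by auto
  qed
  then show ?thesis using wf_subset wf_inv_image wf_less_than by blast
qed

lemma refined_weights_total:
  assumes bij: "bij_betw h {0..<n} Q"
    and a: "Poly_Mapping.keys a \<subseteq> Q" and b: "Poly_Mapping.keys b \<subseteq> Q"
  shows "weight_lex_le (refined_weights Q h n w) a b \<or> weight_lex_le (refined_weights Q h n w) b a"
proof (rule weight_lex_le_total)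
  assume "a \<noteq> b"
  then obtain k where k: "Poly_Mapping.lookup a k \<noteq> Poly_Mapping.lookup b k"
    by (metis poly_mapping_eqI)
  then have "k \<in> Poly_Mapping.keys a \<union> Poly_Mapping.keys b" by (auto simp: in_keys_iff)
  then have "k \<in> Q" using a b by blast
  then obtain j where "j < n" "h j = k" using bij unfolding bij_betw_def by auto
  then have "refined_weights Q h n w (j + 2) a \<noteq> refined_weights Q h n w (j + 2) b"
    using k by (simp add: refined_weights_def)
  then show "\<exists>i. refined_weights Q h n w i a \<noteq> refined_weights Q h n w i b" by blast
qed

lemma refined_weights_least:
  assumes fin: "finite Q" and a: "Poly_Mapping.keys a \<subseteq> Q"
  shows "weight_lex_le (refined_weights Q h n w) 0 a"
proof (cases "a = 0")
  case False
  then obtain k where k: "k \<in> Poly_Mapping.keys a"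
    using keys_eq_empty by blast
  then have "k \<in> Q" using a by blast
  then have "int (Poly_Mapping.lookup a k) \<le> (\<Sum>q\<in>Q. int (Poly_Mapping.lookup a q))"
    using fin by (intro member_le_sum) auto
  moreover have "0 < Poly_Mapping.lookup a k" using k by (simp add: in_keys_iff)
  ultimately have "refined_weights Q h n w 0 0 < refined_weights Q h n w 0 a"
    by (simp add: refined_weights_def)
  then show ?thesis using weight_lex_le_strictI[of 0 _ 0 a] by blast
qed (simp add: weight_lex_le_refl)

text \<open>A predecessor has at most the degree of its successor, and there are only finitely many
  monomials of bounded degree.\<close>

lemma wf_refined_weights:
  fixes Q :: "'v set"
  assumes fin: "finite Q"
  defines "M \<equiv> {m :: 'v \<Rightarrow>\<^sub>0 nat. Poly_Mapping.keys m \<subseteq> Q}"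
  shows "wf {(a, b). a \<in> M \<and> b \<in> M \<and> weight_lex_le (refined_weights Q h n w) a b \<and> a \<noteq> b}"
    (is "wf ?R")
proof (rule wf_if_finite_predecessors)
  let ?W = "refined_weights Q h n w"
  show "trans ?R"
  proof (rule transI)
    fix x y z assume "(x, y) \<in> ?R" "(y, z) \<in> ?R"
    then show "(x, z) \<in> ?R"
      using weight_lex_le_trans[of ?W x y z] weight_lex_le_antisym[of ?W x y] by auto
  qed
  show "(a, a) \<notin> ?R" for a by blast
  have degree_mono: "?W 0 a \<le> ?W 0 b" if "weight_lex_le ?W a b" for a b
  proof (cases "a = b")
    case False
    then have "\<exists>i. (\<forall>j<i. ?W j a = ?W j b) \<and> ?W i a < ?W i b"
      using that unfolding weight_lex_le_def by simp
    then obtain i where "\<forall>j<i. ?W j a = ?W j b" "?W i a < ?W i b" by auto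
    then show ?thesis by (cases i) auto
  qed simp
  fix b
  have "{a. (a, b) \<in> ?R} \<subseteq>
      {a. Poly_Mapping.keys a \<subseteq> Q \<and> (\<Sum>q\<in>Q. Poly_Mapping.lookup a q) \<le> nat (?W 0 b)}"
  proof
    fix a assume "a \<in> {a. (a, b) \<in> ?R}"
    then have "Poly_Mapping.keys a \<subseteq> Q" "?W 0 a \<le> ?W 0 b" unfolding M_def using degree_mono by auto
    then show "a \<in> {a. Poly_Mapping.keys a \<subseteq> Q \<and> (\<Sum>q\<in>Q. Poly_Mapping.lookup a q) \<le> nat (?W 0 b)}"
      by (simp add: refined_weights_def flip: of_nat_sum)
  qed
  then show "finite {a. (a, b) \<in> ?R}"
    by (rule finite_subset[OF _ finite_monomials_degree_le[OF fin]])
qed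

lemma monomial_order_refined_weights:
  fixes Q :: "'v set"
  assumes fin: "finite Q" and bij: "bij_betw h {0..<n} Q"
  shows "monomial_order_on Q (weight_lex_le (refined_weights Q h n w))"
proof -
  let ?W = "refined_weights Q h n w"
  let ?M = "{m :: 'v \<Rightarrow>\<^sub>0 nat. Poly_Mapping.keys m \<subseteq> Q}"
  have "\<forall>a\<in>?M. weight_lex_le ?W a a"
    by (simp add: weight_lex_le_refl)
  moreover have "\<forall>a\<in>?M. \<forall>b\<in>?M. weight_lex_le ?W a b \<and> weight_lex_le ?W b a \<longrightarrow> a = b"
    by (intro ballI impI, elim conjE, erule (1) weight_lex_le_antisym)
  moreover have "\<forall>a\<in>?M. \<forall>b\<in>?M. \<forall>c\<in>?M. weight_lex_le ?W a b \<and> weight_lex_le ?W b c \<longrightarrow> weight_lex_le ?W a c"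
    by (intro ballI impI, elim conjE, erule (1) weight_lex_le_trans)
  moreover have "\<forall>a\<in>?M. \<forall>b\<in>?M. weight_lex_le ?W a b \<or> weight_lex_le ?W b a"
    using refined_weights_total[OF bij] by blast
  moreover have "\<forall>a\<in>?M. \<forall>b\<in>?M. \<forall>c\<in>?M. weight_lex_le ?W a b \<longrightarrow> weight_lex_le ?W (a + c) (b + c)"
    by (intro ballI impI) (rule weight_lex_le_add[OF refined_weights_add])
  moreover have "\<forall>a\<in>?M. weight_lex_le ?W 0 a"
    using refined_weights_least[OF fin] by blast
  ultimately show ?thesis
    unfolding monomial_order_on_def Let_def using wf_refined_weights[OF fin] by (intro conjI)
qed

context
  fixes Q :: "'v set" and le :: "('v \<Rightarrow>\<^sub>0 nat) \<Rightarrow> ('v \<Rightarrow>\<^sub>0 nat) \<Rightarrow> bool"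
  assumes ord: "monomial_order_on Q le"
begin

lemma monomial_order_onD:
  "\<forall>a\<in>{m. Poly_Mapping.keys m \<subseteq> Q}. le a a"
  "\<forall>a\<in>{m. Poly_Mapping.keys m \<subseteq> Q}. \<forall>b\<in>{m. Poly_Mapping.keys m \<subseteq> Q}. le a b \<and> le b a \<longrightarrow> a = b"
  "\<forall>a\<in>{m. Poly_Mapping.keys m \<subseteq> Q}. \<forall>b\<in>{m. Poly_Mapping.keys m \<subseteq> Q}. \<forall>c\<in>{m. Poly_Mapping.keys m \<subseteq> Q}. le a b \<and> le b c \<longrightarrow> le a c"
  "\<forall>a\<in>{m. Poly_Mapping.keys m \<subseteq> Q}. \<forall>b\<in>{m. Poly_Mapping.keys m \<subseteq> Q}. le a b \<or> le b a"
  "\<forall>a\<in>{m. Poly_Mapping.keys m \<subseteq> Q}. \<forall>b\<in>{m. Poly_Mapping.keys m \<subseteq> Q}. \<forall>c\<in>{m. Poly_Mapping.keys m \<subseteq> Q}. le a b \<longrightarrow> le (a + c) (b + c)"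
  "wf {(a, b). a \<in> {m. Poly_Mapping.keys m \<subseteq> Q} \<and> b \<in> {m. Poly_Mapping.keys m \<subseteq> Q} \<and> le a b \<and> a \<noteq> b}"
  using ord unfolding monomial_order_on_def Let_def by - (elim conjE, assumption)+

lemma monomial_order_on_refl: "Poly_Mapping.keys a \<subseteq> Q \<Longrightarrow> le a a"
  using monomial_order_onD(1) by blast

lemma monomial_order_on_antisym:
  "Poly_Mapping.keys a \<subseteq> Q \<Longrightarrow> Poly_Mapping.keys b \<subseteq> Q \<Longrightarrow> le a b \<Longrightarrow> le b a \<Longrightarrow> a = b"
  using monomial_order_onD(2) by blast

lemma monomial_order_on_trans:
  "Poly_Mapping.keys a \<subseteq> Q \<Longrightarrow> Poly_Mapping.keys b \<subseteq> Q \<Longrightarrow> Poly_Mapping.keys c \<subseteq> Q \<Longrightarrow>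
     le a b \<Longrightarrow> le b c \<Longrightarrow> le a c"
  using monomial_order_onD(3) by blast

lemma monomial_order_on_total:
  "Poly_Mapping.keys a \<subseteq> Q \<Longrightarrow> Poly_Mapping.keys b \<subseteq> Q \<Longrightarrow> le a b \<or> le b a"
  using monomial_order_onD(4) by blast

lemma monomial_order_on_add:
  "Poly_Mapping.keys a \<subseteq> Q \<Longrightarrow> Poly_Mapping.keys b \<subseteq> Q \<Longrightarrow> Poly_Mapping.keys c \<subseteq> Q \<Longrightarrow>
     le a b \<Longrightarrow> le (a + c) (b + c)"
  using monomial_order_onD(5) by blast

lemma monomial_order_on_wf:
  "wf {(a, b). Poly_Mapping.keys a \<subseteq> Q \<and> Poly_Mapping.keys b \<subseteq> Q \<and> le a b \<and> a \<noteq> b}"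
  using monomial_order_onD(6) by simp

end

lemma finite_total_has_greatest:
  assumes "finite K" "K \<noteq> {}"
    and total: "\<And>a b. a \<in> K \<Longrightarrow> b \<in> K \<Longrightarrow> le a b \<or> le b a"
    and trans: "\<And>a b c. a \<in> K \<Longrightarrow> b \<in> K \<Longrightarrow> c \<in> K \<Longrightarrow> le a b \<Longrightarrow> le b c \<Longrightarrow> le a c"
  shows "\<exists>m\<in>K. \<forall>m'\<in>K. le m' m"
  using assms(1,2) total trans
proof (induction K rule: finite_ne_induct)
  case (singleton x)
  then show ?case by blast
next
  case (insert x F)
  have "\<exists>m\<in>F. \<forall>m'\<in>F. le m' m"
    by (rule insert.IH) (use insert.prems in blast)+
  then obtain m where m: "m \<in> F" "\<forall>m'\<in>F. le m' m" by blast
  show ?case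
  proof (cases "le x m")
    case True
    then show ?thesis using m by blast
  next
    case False
    then have "le m x" using insert.prems(1) m(1) by blast
    then have "le m' x" if "m' \<in> F" for m'
      using insert.prems(2)[of m' m x] m that by blast
    then show ?thesis using False insert.prems(1) by blast
  qed
qed

lemma lead_monom_greatest:
  assumes ord: "monomial_order_on Q le" and f: "f \<in> poly_ring Q" "f \<noteq> 0"
  shows "lead_monom le f \<in> Poly_Mapping.keys f"
    and "m \<in> Poly_Mapping.keys f \<Longrightarrow> le m (lead_monom le f)"
proof -
  have M: "Poly_Mapping.keys m \<subseteq> Q" if "m \<in> Poly_Mapping.keys f" for m
    using f(1) that unfolding poly_ring_def by blast
  have "\<exists>m\<in>Poly_Mapping.keys f. \<forall>m'\<in>Poly_Mapping.keys f. le m' m"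
  proof (rule finite_total_has_greatest)
    show "Poly_Mapping.keys f \<noteq> {}" using f(2) by simp
    show "le a b \<or> le b a" if "a \<in> Poly_Mapping.keys f" "b \<in> Poly_Mapping.keys f" for a b
      using monomial_order_on_total[OF ord M[OF that(1)] M[OF that(2)]] .
    show "le a c" if "a \<in> Poly_Mapping.keys f" "b \<in> Poly_Mapping.keys f" "c \<in> Poly_Mapping.keys f"
      and "le a b" "le b c" for a b c
      using monomial_order_on_trans[OF ord M[OF that(1)] M[OF that(2)] M[OF that(3)] that(4,5)] .
  qed simp
  then obtain m where m: "m \<in> Poly_Mapping.keys f" "\<forall>m'\<in>Poly_Mapping.keys f. le m' m" by blast
  have "lead_monom le f = m"
    unfolding lead_monom_def
  proof (rule the_equality)
    fix x assume x: "x \<in> Poly_Mapping.keys f \<and> (\<forall>m'\<in>Poly_Mapping.keys f. le m' x)"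
    show "x = m"
      using monomial_order_on_antisym[OF ord M M] x m by blast
  qed (use m in blast)
  then show "lead_monom le f \<in> Poly_Mapping.keys f"
    and "m' \<in> Poly_Mapping.keys f \<Longrightarrow> le m' (lead_monom le f)" for m'
    using m by simp_all
qed

lemma lead_monom_binomial:
  assumes ord: "monomial_order_on Q le"
    and uv: "Poly_Mapping.keys u \<subseteq> Q" "Poly_Mapping.keys v \<subseteq> Q" "le v u" "u \<noteq> v"
  shows "lead_monom le (monom u - monom v :: ('v, 'k::comm_ring_1) mpoly) = u"
  unfolding lead_monom_def keys_monom_diff[OF uv(4)]
proof (rule the_equality)
  show "u \<in> {u, v} \<and> (\<forall>m'\<in>{u, v}. le m' u)"
    using monomial_order_on_refl[OF ord uv(1)] uv(3) by blast
  fix m assume "m \<in> {u, v} \<and> (\<forall>m'\<in>{u, v}. le m' m)"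
  then show "m = u" using monomial_order_on_antisym[OF ord uv(1,2)] uv(3) by blast
qed

subsection \<open>Cuts of a tree\<close>

definition cut_of :: "'a set \<Rightarrow> 'a set set \<Rightarrow> 'a set \<Rightarrow> 'a set set" where
  "cut_of V E A = cut_edges E {A, V - A}"

lemma simple_graph_edgeE:
  assumes "simple_graph V E" "e \<in> E"
  obtains u v where "u \<noteq> v" "u \<in> V" "v \<in> V" "e = {u, v}"
  using assms unfolding simple_graph_def by blast

lemma simple_graph_adj_vertices:
  assumes "simple_graph V E" "adj E x y"
  shows "x \<in> V" "y \<in> V"
proof -
  obtain u v where "u \<in> V" "v \<in> V" "{x, y} = {u, v}"
    using assms simple_graph_edgeE unfolding adj_def by metis
  then show "x \<in> V" "y \<in> V" by (metis doubleton_eq_iff)+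
qed

lemma finite_edges:
  assumes "simple_graph V E"
  shows "finite E"
proof (rule finite_subset)
  show "E \<subseteq> Pow V"
  proof
    fix e assume "e \<in> E"
    then obtain u v where "u \<in> V" "v \<in> V" "e = {u, v}" using assms simple_graph_edgeE by metis
    then show "e \<in> Pow V" by simp
  qed
  show "finite (Pow V)" using assms unfolding simple_graph_def by simp
qed

lemma cut_of_subset: "cut_of V E A \<subseteq> E"
  unfolding cut_of_def cut_edges_def by auto

lemma edge_in_cut_of_iff:
  assumes "u \<in> V" "v \<in> V" "{u, v} \<in> E"
  shows "{u, v} \<in> cut_of V E A \<longleftrightarrow> (u \<in> A \<longleftrightarrow> v \<notin> A)"
  using assms unfolding cut_of_def cut_edges_def by auto

lemma cut_of_symmetric_difference:
  assumes "simple_graph V E"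
  shows "cut_of V E ((A - B) \<union> (B - A)) = (cut_of V E A - cut_of V E B) \<union> (cut_of V E B - cut_of V E A)"
proof (rule set_eqI)
  fix e
  show "e \<in> cut_of V E ((A - B) \<union> (B - A)) \<longleftrightarrow> e \<in> (cut_of V E A - cut_of V E B) \<union> (cut_of V E B - cut_of V E A)"
  proof (cases "e \<in> E")
    case True
    then obtain u v where "u \<in> V" "v \<in> V" "e = {u, v}"
      using assms simple_graph_edgeE by metis
    then show ?thesis using True edge_in_cut_of_iff[of u V v E] by auto
  qed (use cut_of_subset in blast)
qed

text \<open>A path from \<open>u\<close> to \<open>v\<close> avoiding the edge \<open>{u, v}\<close> would close a cycle with it.\<close>

lemma acyclic_edge_separates:
  assumes "\<not> has_cycle E" "{u, v} \<in> E" "u \<noteq> v"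
  shows "\<not> (\<lambda>x y. adj E x y \<and> {x, y} \<noteq> {u, v})\<^sup>*\<^sup>* u v"
proof
  let ?r = "\<lambda>x y. adj E x y \<and> {x, y} \<noteq> {u, v}"
  assume "?r\<^sup>*\<^sup>* u v"
  then obtain xs where "rtrancl_path ?r u xs v" by (auto simp: rtranclp_eq_rtrancl_path)
  then obtain ys where path: "rtrancl_path ?r u ys v" and dist: "distinct (u # ys)"
    by (rule rtrancl_path_distinct)
  have "ys \<noteq> []" using path \<open>u \<noteq> v\<close> by (auto elim: rtrancl_path.cases)
  then have last: "last (u # ys) = v" using rtrancl_path_last[OF path] by simp
  have "ys \<noteq> [v]"
  proof
    assume "ys = [v]"
    then have "?r u v" using path by (auto elim!: rtrancl_path.cases)
    then show False by simp
  qed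
  then have "3 \<le> length (u # ys)"
    using \<open>ys \<noteq> []\<close> last by (cases ys; cases "tl ys") auto
  moreover have "adj E ((u # ys) ! i) ((u # ys) ! Suc i)" if "Suc i < length (u # ys)" for i
    using rtrancl_path_nth[OF path, of i] that by simp
  moreover have "adj E (last (u # ys)) (hd (u # ys))"
    using last assms(2) by (simp add: adj_def insert_commute)
  ultimately have "has_cycle E"
    using dist unfolding has_cycle_def by (intro exI[of _ "u # ys"] conjI allI impI)
  with assms(1) show False ..
qed

lemma tree_single_edge_cut:
  assumes tree: "is_tree V E" and e: "e \<in> E"
  shows "\<exists>A \<subseteq> V. cut_of V E A = {e}"
proof -
  have sg: "simple_graph V E" using tree unfolding is_tree_def by blast
  obtain u v where uv: "u \<noteq> v" "u \<in> V" "v \<in> V" "e = {u, v}"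
    using simple_graph_edgeE[OF sg e] by blast
  define r where "r x y \<longleftrightarrow> adj E x y \<and> {x, y} \<noteq> e" for x y
  define A where "A = {x. r\<^sup>*\<^sup>* u x}"
  have "A \<subseteq> V"
  proof
    fix x assume "x \<in> A"
    then have "r\<^sup>*\<^sup>* u x" unfolding A_def by blast
    then show "x \<in> V"
      by (induction rule: rtranclp_induct) (use uv simple_graph_adj_vertices[OF sg] r_def in auto)
  qed
  moreover have "u \<in> A" unfolding A_def by simp
  moreover have "v \<notin> A"
    using acyclic_edge_separates[of E u v] tree e uv unfolding A_def r_def is_tree_def by auto
  moreover have "e' \<notin> cut_of V E A" if "e' \<in> E" "e' \<noteq> e" for e'
  proof -
    obtain a b where ab: "a \<in> V" "b \<in> V" "e' = {a, b}" using simple_graph_edgeE[OF sg \<open>e' \<in> E\<close>] by metis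
    then have "r a b" "r b a" using that unfolding r_def adj_def by (auto simp: insert_commute)
    then have "a \<in> A \<longleftrightarrow> b \<in> A" unfolding A_def mem_Collect_eq by (meson rtranclp.rtrancl_into_rtrancl)
    then show ?thesis using ab that edge_in_cut_of_iff[of a V b E A] by auto
  qed
  ultimately have "cut_of V E A = {e}"
    using e uv edge_in_cut_of_iff[of u V v E A] cut_of_subset[of V E A] by blast
  with \<open>A \<subseteq> V\<close> show ?thesis by blast
qed

lemma tree_cut_of_surj:
  assumes tree: "is_tree V E" and "S \<subseteq> E"
  shows "\<exists>A \<subseteq> V. cut_of V E A = S"
proof -
  have sg: "simple_graph V E" using tree unfolding is_tree_def by blast
  have "finite S" using assms(2) finite_edges[OF sg] finite_subset by blast
  then show ?thesis using assms(2)
  proof (induction S rule: finite_induct)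
    case empty
    have "cut_of V E {} = {}" unfolding cut_of_def cut_edges_def by auto
    then show ?case by blast
  next
    case (insert e S)
    obtain A0 where A0: "A0 \<subseteq> V" "cut_of V E A0 = S" using insert.IH insert.prems by blast
    have "e \<in> E" using insert.prems by simp
    then obtain A1 where A1: "A1 \<subseteq> V" "cut_of V E A1 = {e}" using tree_single_edge_cut[OF tree] by blast
    have "cut_of V E ((A0 - A1) \<union> (A1 - A0)) = insert e S"
      unfolding cut_of_symmetric_difference[OF sg] A0(2) A1(2) using insert(2) by blast
    moreover have "(A0 - A1) \<union> (A1 - A0) \<subseteq> V" using A0 A1 by blast
    ultimately show ?case by blast
  qed
qed

text \<open>If \<open>A\<close> and \<open>B\<close> have the same cut, their symmetric difference cuts no edge; by
  connectedness it is then empty or everything, i.e. \<open>B = A\<close> or \<open>B = V - A\<close>.\<close>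

lemma tree_cut_of_inj:
  assumes tree: "is_tree V E" and "A \<subseteq> V" "B \<subseteq> V" and eq: "cut_of V E A = cut_of V E B"
  shows "{A, V - A} = {B, V - B}"
proof -
  have sg: "simple_graph V E" using tree unfolding is_tree_def by blast
  define D where "D = (A - B) \<union> (B - A)"
  have no_cut: "cut_of V E D = {}" unfolding D_def using cut_of_symmetric_difference[OF sg, of A B] eq by simp
  obtain r where r: "r \<in> V" using tree unfolding is_tree_def by blast
  have step: "y \<in> D \<longleftrightarrow> z \<in> D" if "adj E y z" for y z
    using edge_in_cut_of_iff[of y V z E D] no_cut simple_graph_adj_vertices[OF sg that] that
    unfolding adj_def by blast
  have same: "x \<in> D \<longleftrightarrow> r \<in> D" if "x \<in> V" for x
  proof -
    have "(r, x) \<in> {(x, y). adj E x y}\<^sup>*"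
      using tree r that unfolding is_tree_def graph_connected_def by blast
    then show ?thesis by (induction rule: rtrancl_induct) (auto dest: step)
  qed
  show ?thesis
  proof (cases "r \<in> D")
    case False
    then have "A = B" using same assms(2,3) unfolding D_def by blast
    then show ?thesis by simp
  next
    case True
    then have "B = V - A" using same assms(2,3) unfolding D_def by blast
    then show ?thesis using assms(2) by (auto simp: Diff_Diff_Int Int_absorb1)
  qed
qed

text \<open>The difference of the two sides is \<open>2 (|X| - |X \<inter> Y|) (|Y| - |X \<inter> Y|)\<close>.\<close>

lemma concave_card_weight_inter_union_less:
  fixes X Y :: "'b set" and n :: int
  assumes fin: "finite X" "finite Y" and incomparable: "\<not> X \<subseteq> Y" "\<not> Y \<subseteq> X"
  defines "w \<equiv> \<lambda>A. int (card A) * (n - int (card A))"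
  shows "w (X \<inter> Y) + w (X \<union> Y) < w X + w Y"
proof -
  define a p q where "a = int (card (X \<inter> Y))" and "p = int (card X)" and "q = int (card Y)"
  have "card (X \<union> Y) + card (X \<inter> Y) = card X + card Y" using card_Un_Int[OF fin] by simp
  then have union: "int (card (X \<union> Y)) = p + q - a" unfolding a_def p_def q_def by linarith
  have "card (X \<inter> Y) < card X" "card (X \<inter> Y) < card Y"
    using incomparable fin by (auto intro!: psubset_card_mono)
  then have "0 < (p - a) * (q - a)" unfolding a_def p_def q_def by simp
  moreover have "w X + w Y - w (X \<inter> Y) - w (X \<union> Y) = 2 * ((p - a) * (q - a))"
    unfolding w_def union a_def[symmetric] p_def[symmetric] q_def[symmetric]
    by (simp add: algebra_simps)
  ultimately show ?thesis by linarith
qed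

subsection \<open>The cut ideal of a tree\<close>

locale tree_cut_ideal =
  fixes V :: "'a set" and E :: "'a set set"
  assumes tree: "is_tree V E" and edges_nonempty: "E \<noteq> {}"
begin

abbreviation Q :: "'a set set set" where "Q \<equiv> unordered_partitions V"

abbreviation Cut :: "'a set set \<Rightarrow> 'a set set" where "Cut P \<equiv> cut_edges E P"

lemma simple_graph: "simple_graph V E"
  using tree unfolding is_tree_def by simp

lemma finite_E: "finite E"
  using finite_edges[OF simple_graph] .

lemma finite_Q: "finite Q"
proof -
  have "Q = (\<lambda>A. {A, V - A}) ` Pow V" unfolding unordered_partitions_def by auto
  then show ?thesis using simple_graph unfolding simple_graph_def by simp
qed

lemma Cut_subset: "Cut P \<subseteq> E"
  unfolding cut_edges_def by auto

lemma finite_Cut: "finite (Cut P)"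
  using finite_subset[OF Cut_subset finite_E] .

lemma Cut_inj:
  assumes "P \<in> Q" "P' \<in> Q" "Cut P = Cut P'"
  shows "P = P'"
proof -
  obtain A B where "A \<subseteq> V" "P = {A, V - A}" "B \<subseteq> V" "P' = {B, V - B}"
    using assms(1,2) unfolding unordered_partitions_def by blast
  then show ?thesis
    using tree_cut_of_inj[OF tree] assms(3) unfolding cut_of_def by simp
qed

lemma Cut_surj:
  assumes "S \<subseteq> E"
  shows "\<exists>P\<in>Q. Cut P = S"
proof -
  obtain A where "A \<subseteq> V" "cut_of V E A = S" using tree_cut_of_surj[OF tree assms] by blast
  then have "{A, V - A} \<in> Q" "Cut {A, V - A} = S"
    unfolding unordered_partitions_def cut_of_def by blast+
  then show ?thesis by blast
qed

definition partition_with_cut :: "'a set set \<Rightarrow> 'a set set" where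
  "partition_with_cut S = (THE P. P \<in> Q \<and> Cut P = S)"

lemma partition_with_cut:
  assumes "S \<subseteq> E"
  shows "partition_with_cut S \<in> Q" "Cut (partition_with_cut S) = S"
proof -
  have "\<exists>!P. P \<in> Q \<and> Cut P = S" using Cut_surj[OF assms] Cut_inj by blast
  then have "partition_with_cut S \<in> Q \<and> Cut (partition_with_cut S) = S"
    unfolding partition_with_cut_def by (rule theI')
  then show "partition_with_cut S \<in> Q" "Cut (partition_with_cut S) = S" by blast+
qed

abbreviation cut_exp :: "('a set set \<Rightarrow>\<^sub>0 nat) \<Rightarrow> ('a set \<times> bool \<Rightarrow>\<^sub>0 nat)" where
  "cut_exp m \<equiv> cut_exponent E Q m"

lemma cut_exp_add: "cut_exp (a + b) = cut_exp a + cut_exp b"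
  by (simp add: cut_exponent_def cut_labels_def lookup_add single_add sum.distrib)

lemma cut_exp_single: "P \<in> Q \<Longrightarrow> cut_exp (Poly_Mapping.single P 1) = cut_labels E P 1"
  unfolding cut_exponent_def using finite_Q
  by (subst sum.remove) (auto simp: lookup_single when_def cut_labels_def intro!: sum.neutral split: if_splits)

lemma lookup_cut_labels:
  "Poly_Mapping.lookup (cut_labels E P k) (e, b) = (if e \<in> E \<and> (e \<in> Cut P) = b then k else 0)"
proof -
  have "Poly_Mapping.lookup (cut_labels E P k) (e, b) =
        (\<Sum>e'\<in>E. if e' = e then (if (e \<in> Cut P) = b then k else 0) else 0)"
    unfolding cut_labels_def lookup_sum by (rule sum.cong) (auto simp: lookup_single when_def)
  then show ?thesis using finite_E by simp
qed

lemma lookup_cut_exp: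
  "e \<in> E \<Longrightarrow> Poly_Mapping.lookup (cut_exp m) (e, b) =
     (\<Sum>P\<in>Q. if (e \<in> Cut P) = b then Poly_Mapping.lookup m P else 0)"
  unfolding cut_exponent_def lookup_sum lookup_cut_labels by simp

definition deg :: "('a set set \<Rightarrow>\<^sub>0 nat) \<Rightarrow> nat" where
  "deg m = (\<Sum>P\<in>Q. Poly_Mapping.lookup m P)"

lemma deg_eq_lookup_cut_exp:
  "e \<in> E \<Longrightarrow> deg m = Poly_Mapping.lookup (cut_exp m) (e, True) + Poly_Mapping.lookup (cut_exp m) (e, False)"
  unfolding lookup_cut_exp deg_def sum.distrib[symmetric] by (rule sum.cong) auto

lemma deg_add: "deg (a + b) = deg a + deg b"
  by (simp add: deg_def lookup_add sum.distrib)

lemma deg_single: "P \<in> Q \<Longrightarrow> deg (Poly_Mapping.single P 1) = 1"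
  unfolding deg_def using finite_Q
  by (subst sum.remove) (auto simp: lookup_single when_def intro!: sum.neutral)

lemma deg_eq_0:
  assumes "Poly_Mapping.keys m \<subseteq> Q" "deg m = 0"
  shows "m = 0"
proof (rule poly_mapping_eqI)
  fix P
  show "Poly_Mapping.lookup m P = Poly_Mapping.lookup 0 P"
  proof (cases "P \<in> Q")
    case True
    then show ?thesis using assms(2) finite_Q unfolding deg_def by simp
  next
    case False
    then show ?thesis using assms(1) by (auto simp: in_keys_iff)
  qed
qed

definition cut_chain :: "('a set set \<Rightarrow>\<^sub>0 nat) \<Rightarrow> bool" where
  "cut_chain m \<longleftrightarrow> (\<forall>P\<in>Poly_Mapping.keys m. \<forall>P'\<in>Poly_Mapping.keys m. Cut P \<subseteq> Cut P' \<or> Cut P' \<subseteq> Cut P)"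

lemma cut_chain_subset: "cut_chain m \<Longrightarrow> Poly_Mapping.keys m' \<subseteq> Poly_Mapping.keys m \<Longrightarrow> cut_chain m'"
  unfolding cut_chain_def by blast

lemma cut_chain_top:
  assumes keys: "Poly_Mapping.keys m \<subseteq> Q" and chain: "cut_chain m" and "m \<noteq> 0"
  shows "\<exists>P\<in>Poly_Mapping.keys m. Cut P = {e \<in> E. Poly_Mapping.lookup (cut_exp m) (e, True) \<noteq> 0}"
proof -
  let ?c = "Max ((\<lambda>P. card (Cut P)) ` Poly_Mapping.keys m)"
  have "?c \<in> (\<lambda>P. card (Cut P)) ` Poly_Mapping.keys m" using \<open>m \<noteq> 0\<close> by (intro Max_in) auto
  then obtain P where "P \<in> Poly_Mapping.keys m" "card (Cut P) = ?c" by auto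
  then have P: "P \<in> Poly_Mapping.keys m" "\<forall>P'\<in>Poly_Mapping.keys m. card (Cut P') \<le> card (Cut P)"
    by simp_all
  have top: "Cut P' \<subseteq> Cut P" if "P' \<in> Poly_Mapping.keys m" for P'
    using chain P that card_seteq[OF finite_Cut] unfolding cut_chain_def by blast
  have "e \<in> Cut P \<longleftrightarrow> Poly_Mapping.lookup (cut_exp m) (e, True) \<noteq> 0" if e: "e \<in> E" for e
  proof -
    have "Poly_Mapping.lookup (cut_exp m) (e, True) \<noteq> 0 \<longleftrightarrow>
          (\<exists>P'\<in>Q. e \<in> Cut P' \<and> Poly_Mapping.lookup m P' \<noteq> 0)"
      unfolding lookup_cut_exp[OF e] using finite_Q by (auto simp: sum_eq_0_iff)
    also have "\<dots> \<longleftrightarrow> (\<exists>P'\<in>Poly_Mapping.keys m. e \<in> Cut P')"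
      using keys by (auto simp: in_keys_iff)
    also have "\<dots> \<longleftrightarrow> e \<in> Cut P" using top P(1) by blast
    finally show ?thesis by simp
  qed
  then show ?thesis using P(1) Cut_subset by blast
qed

lemma cut_chain_common_top:
  assumes "Poly_Mapping.keys m \<subseteq> Q" "Poly_Mapping.keys m' \<subseteq> Q" "cut_chain m" "cut_chain m'"
    and "cut_exp m = cut_exp m'" "m \<noteq> 0" "m' \<noteq> 0"
  obtains P where "P \<in> Poly_Mapping.keys m" "P \<in> Poly_Mapping.keys m'"
proof -
  obtain P where P: "P \<in> Poly_Mapping.keys m"
      "Cut P = {e \<in> E. Poly_Mapping.lookup (cut_exp m) (e, True) \<noteq> 0}"
    using cut_chain_top[OF assms(1,3,6)] by auto
  obtain P' where P': "P' \<in> Poly_Mapping.keys m'"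
      "Cut P' = {e \<in> E. Poly_Mapping.lookup (cut_exp m') (e, True) \<noteq> 0}"
    using cut_chain_top[OF assms(2,4,7)] by auto
  have "Cut P' = Cut P" using P(2) P'(2) assms(5) by simp
  moreover have "P \<in> Q" "P' \<in> Q" using P(1) P'(1) assms(1,2) by blast+
  ultimately have "P' = P" using Cut_inj[of P' P] by simp
  then show ?thesis using that P(1) P'(1) by simp
qed

text \<open>The largest cut of a chain is the set of edges carrying an \<open>s\<close> in its image, so it can be
  peeled off.\<close>

lemma cut_chain_unique:
  assumes "Poly_Mapping.keys m \<subseteq> Q" "Poly_Mapping.keys m' \<subseteq> Q" "cut_chain m" "cut_chain m'"
    and "cut_exp m = cut_exp m'"
  shows "m = m'"
  using assms
proof (induction "deg m" arbitrary: m m')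
  case 0
  obtain e where e: "e \<in> E" using edges_nonempty by blast
  have "deg m' = deg m"
    using deg_eq_lookup_cut_exp[OF e, of m] deg_eq_lookup_cut_exp[OF e, of m'] "0.prems"(5) by simp
  then have "m = 0" "m' = 0"
    using deg_eq_0[OF "0.prems"(1)] deg_eq_0[OF "0.prems"(2)] "0.hyps" by simp_all
  then show ?case by simp
next
  case (Suc d)
  obtain e where e: "e \<in> E" using edges_nonempty by blast
  have "deg m' = deg m"
    using deg_eq_lookup_cut_exp[OF e, of m] deg_eq_lookup_cut_exp[OF e, of m'] Suc.prems(5) by simp
  then have "m \<noteq> 0" "m' \<noteq> 0" using Suc.hyps(2) by (auto simp: deg_def)
  obtain P where P: "P \<in> Poly_Mapping.keys m" "P \<in> Poly_Mapping.keys m'"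
    using cut_chain_common_top[OF Suc.prems \<open>m \<noteq> 0\<close> \<open>m' \<noteq> 0\<close>] .
  have "P \<in> Q" using P(1) Suc.prems(1) by blast
  define m1 m1' where "m1 = m - Poly_Mapping.single P 1" and "m1' = m' - Poly_Mapping.single P 1"
  have m: "m = Poly_Mapping.single P 1 + m1"
    unfolding m1_def by (rule single_add_diff[OF P(1)])
  have m': "m' = Poly_Mapping.single P 1 + m1'"
    unfolding m1'_def by (rule single_add_diff[OF P(2)])
  have "deg m = 1 + deg m1" by (subst m) (simp only: deg_add deg_single[OF \<open>P \<in> Q\<close>])
  then have "d = deg m1" using Suc.hyps(2) by simp
  moreover have "Poly_Mapping.keys m1 \<subseteq> Q" "Poly_Mapping.keys m1' \<subseteq> Q"
    unfolding m1_def m1'_def using Suc.prems(1,2) by (auto dest: subsetD[OF keys_diff_subset])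
  moreover have "cut_chain m1" "cut_chain m1'"
    unfolding m1_def m1'_def
    using cut_chain_subset[OF Suc.prems(3) keys_diff_subset] cut_chain_subset[OF Suc.prems(4) keys_diff_subset] .
  moreover have "cut_exp m1 = cut_exp m1'"
    using Suc.prems(5) by (subst (asm) m, subst (asm) m') (simp add: cut_exp_add)
  ultimately have "m1 = m1'" by (rule Suc.hyps(1))
  then show ?case using m m' by simp
qed

definition cut_weight :: "'a set set \<Rightarrow> int" where
  "cut_weight P = int (card (Cut P)) * (int (card E) - int (card (Cut P)))"

definition enum_partitions :: "nat \<Rightarrow> 'a set set" where
  "enum_partitions = (SOME h. bij_betw h {0..<card Q} Q)"

abbreviation W :: "nat \<Rightarrow> ('a set set \<Rightarrow>\<^sub>0 nat) \<Rightarrow> int" where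
  "W \<equiv> refined_weights Q enum_partitions (card Q) cut_weight"

abbreviation monom_le :: "('a set set \<Rightarrow>\<^sub>0 nat) \<Rightarrow> ('a set set \<Rightarrow>\<^sub>0 nat) \<Rightarrow> bool" where
  "monom_le \<equiv> weight_lex_le W"

lemma monomial_order: "monomial_order_on Q monom_le"
proof (rule monomial_order_refined_weights[OF finite_Q])
  show "bij_betw enum_partitions {0..<card Q} Q"
    unfolding enum_partitions_def using someI_ex[OF ex_bij_betw_nat_finite[OF finite_Q]] .
qed

definition var_pair :: "'a set set \<Rightarrow> 'a set set \<Rightarrow> ('a set set \<Rightarrow>\<^sub>0 nat)" where
  "var_pair P P' = Poly_Mapping.single P 1 + Poly_Mapping.single P' 1"

lemma keys_var_pair: "Poly_Mapping.keys (var_pair P P') \<subseteq> {P, P'}"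
  unfolding var_pair_def by (auto simp: in_keys_iff lookup_add lookup_single when_def split: if_splits)

lemma lookup_var_pair: "P \<noteq> P' \<Longrightarrow> Poly_Mapping.lookup (var_pair P P') R = (if R = P \<or> R = P' then 1 else 0)"
  unfolding var_pair_def by (auto simp: lookup_add lookup_single when_def)

lemma squarefree_var_pair: "P \<noteq> P' \<Longrightarrow> squarefree_monomial (var_pair P P')"
  unfolding squarefree_monomial_def by (simp add: lookup_var_pair)

lemma degree_var_pair: "P \<noteq> P' \<Longrightarrow> monomial_degree (var_pair P P') = 2"
proof -
  assume ne: "P \<noteq> P'"
  have "Poly_Mapping.keys (var_pair P P') = {P, P'}"
    by (rule set_eqI) (simp add: in_keys_iff lookup_var_pair[OF ne])
  then show ?thesis unfolding monomial_degree_def using ne by (simp add: lookup_var_pair)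
qed

lemma cut_exp_var_pair: "P \<in> Q \<Longrightarrow> P' \<in> Q \<Longrightarrow> cut_exp (var_pair P P') = cut_labels E P 1 + cut_labels E P' 1"
  unfolding var_pair_def by (simp only: cut_exp_add cut_exp_single)

definition meet :: "'a set set \<Rightarrow> 'a set set \<Rightarrow> 'a set set" where
  "meet P P' = partition_with_cut (Cut P \<inter> Cut P')"

definition join :: "'a set set \<Rightarrow> 'a set set \<Rightarrow> 'a set set" where
  "join P P' = partition_with_cut (Cut P \<union> Cut P')"

lemma meet_join:
  shows "meet P P' \<in> Q" "Cut (meet P P') = Cut P \<inter> Cut P'"
    and "join P P' \<in> Q" "Cut (join P P') = Cut P \<union> Cut P'"
  unfolding meet_def join_def using partition_with_cut Cut_subset by (meson Int_lower1 order_trans le_supI)+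

lemma cut_labels_meet_join:
  "cut_labels E (meet P P') 1 + cut_labels E (join P P') 1 = cut_labels E P 1 + cut_labels E P' 1"
proof -
  have "Poly_Mapping.single (e, e \<in> Cut (meet P P')) (1::nat) + Poly_Mapping.single (e, e \<in> Cut (join P P')) 1 =
        Poly_Mapping.single (e, e \<in> Cut P) 1 + Poly_Mapping.single (e, e \<in> Cut P') 1" for e
    unfolding meet_join by (cases "e \<in> Cut P"; cases "e \<in> Cut P'") (simp_all add: add.commute)
  then show ?thesis unfolding cut_labels_def sum.distrib[symmetric] by simp
qed

definition incomparable_pairs :: "('a set set \<times> 'a set set) set" where
  "incomparable_pairs = {(P, P'). P \<in> Q \<and> P' \<in> Q \<and> \<not> Cut P \<subseteq> Cut P' \<and> \<not> Cut P' \<subseteq> Cut P}"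

definition hibi_binomial :: "'a set set \<times> 'a set set \<Rightarrow> ('a set set, 'k::comm_ring_1) mpoly" where
  "hibi_binomial = (\<lambda>(P, P'). monom (var_pair P P') - monom (var_pair (meet P P') (join P P')))"

definition hibi_binomials :: "('a set set, 'k::comm_ring_1) mpoly set" where
  "hibi_binomials = hibi_binomial ` incomparable_pairs"

lemma incomparable_pairsD:
  assumes "(P, P') \<in> incomparable_pairs"
  shows "P \<in> Q" "P' \<in> Q" "P \<noteq> P'" "meet P P' \<noteq> join P P'"
proof -
  show "P \<in> Q" "P' \<in> Q" "P \<noteq> P'" using assms unfolding incomparable_pairs_def by auto
  have "Cut (meet P P') \<noteq> Cut (join P P')" using assms unfolding incomparable_pairs_def meet_join by auto
  then show "meet P P' \<noteq> join P P'" by auto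
qed

lemma cut_exp_meet_join:
  "P \<in> Q \<Longrightarrow> P' \<in> Q \<Longrightarrow> cut_exp (var_pair (meet P P') (join P P')) = cut_exp (var_pair P P')"
  by (simp only: cut_exp_var_pair meet_join(1,3) cut_labels_meet_join)

lemma meet_join_less:
  assumes "(P, P') \<in> incomparable_pairs"
  shows "monom_le (var_pair (meet P P') (join P P')) (var_pair P P')"
    and "var_pair (meet P P') (join P P') \<noteq> var_pair P P'"
proof -
  have Q: "P \<in> Q" "P' \<in> Q" "meet P P' \<in> Q" "join P P' \<in> Q"
    using assms meet_join unfolding incomparable_pairs_def by auto
  have W_single: "W 0 (Poly_Mapping.single R 1) = 1" "W 1 (Poly_Mapping.single R 1) = cut_weight R"
    if "R \<in> Q" for R
    using refined_weights_single[OF finite_Q that] by simp_all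
  have "W 0 (var_pair (meet P P') (join P P')) = W 0 (var_pair P P')"
    unfolding var_pair_def refined_weights_add W_single[OF Q(1)] W_single[OF Q(2)]
      W_single[OF Q(3)] W_single[OF Q(4)] ..
  moreover have "W 1 (var_pair (meet P P') (join P P')) < W 1 (var_pair P P')"
    unfolding var_pair_def refined_weights_add W_single[OF Q(1)] W_single[OF Q(2)]
      W_single[OF Q(3)] W_single[OF Q(4)] cut_weight_def meet_join
    using assms concave_card_weight_inter_union_less[OF finite_Cut finite_Cut, of P P' "int (card E)"]
    unfolding incomparable_pairs_def by simp
  ultimately show "monom_le (var_pair (meet P P') (join P P')) (var_pair P P')"
    and "var_pair (meet P P') (join P P') \<noteq> var_pair P P'"
    using weight_lex_le_strictI[of 1 W] by (simp_all add: less_Suc_eq)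
qed

lemma hibi_binomial_in_cut_ideal:
  assumes "(P, P') \<in> incomparable_pairs"
  shows "(hibi_binomial (P, P') :: ('a set set, 'k::comm_ring_1) mpoly) \<in> cut_ideal V E"
proof -
  let ?u = "var_pair P P'" and ?v = "var_pair (meet P P') (join P P')"
  have keys: "Poly_Mapping.keys ?u \<subseteq> Q" "Poly_Mapping.keys ?v \<subseteq> Q"
    using keys_var_pair incomparable_pairsD[OF assms] meet_join by blast+
  have "?u \<noteq> ?v" using meet_join_less(2)[OF assms] by simp
  then have "(monom ?u - monom ?v :: ('a set set, 'k) mpoly) \<in> poly_ring Q"
    unfolding poly_ring_def using keys by (simp add: keys_monom_diff)
  moreover have "cut_hom E (monom ?u - monom ?v :: ('a set set, 'k) mpoly) = 0"
    unfolding cut_hom_binomial cut_exponent_keys[OF finite_Q keys(1)] cut_exponent_keys[OF finite_Q keys(2)]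
    using cut_exp_meet_join incomparable_pairsD[OF assms] by simp
  ultimately show ?thesis unfolding cut_ideal_def hibi_binomial_def by simp
qed

lemma lead_monom_hibi_binomial:
  assumes "(P, P') \<in> incomparable_pairs"
  shows "lead_monom monom_le (hibi_binomial (P, P') :: ('a set set, 'k::comm_ring_1) mpoly) = var_pair P P'"
proof -
  have keys: "Poly_Mapping.keys (var_pair P P') \<subseteq> Q"
    "Poly_Mapping.keys (var_pair (meet P P') (join P P')) \<subseteq> Q"
    using keys_var_pair incomparable_pairsD[OF assms] meet_join by blast+
  show ?thesis
    unfolding hibi_binomial_def using meet_join_less[OF assms]
    by (simp add: lead_monom_binomial[OF monomial_order keys])
qed

lemma not_cut_chain_divisible:
  assumes "Poly_Mapping.keys m \<subseteq> Q" "\<not> cut_chain m"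
  obtains P P' where "(P, P') \<in> incomparable_pairs" "m = var_pair P P' + (m - var_pair P P')"
proof -
  obtain P P' where P: "P \<in> Poly_Mapping.keys m" "P' \<in> Poly_Mapping.keys m"
    and incomparable: "\<not> Cut P \<subseteq> Cut P'" "\<not> Cut P' \<subseteq> Cut P"
    using assms(2) unfolding cut_chain_def by blast
  then have "(P, P') \<in> incomparable_pairs"
    using assms(1) unfolding incomparable_pairs_def by blast
  moreover have "m = var_pair P P' + (m - var_pair P P')"
  proof (rule add_diff_poly_mapping)
    fix R
    have "P \<noteq> P'" using incomparable by blast
    then show "Poly_Mapping.lookup (var_pair P P') R \<le> Poly_Mapping.lookup m R"
      using P by (auto simp: lookup_var_pair in_keys_iff)
  qed
  ultimately show ?thesis using that by blast
qed

lemma hibi_rewrite: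
  assumes PP': "(P, P') \<in> incomparable_pairs" and c: "Poly_Mapping.keys c \<subseteq> Q"
  defines "m \<equiv> var_pair P P' + c" and "m'' \<equiv> var_pair (meet P P') (join P P') + c"
  shows "Poly_Mapping.keys m'' \<subseteq> Q" "cut_exp m'' = cut_exp m" "monom_le m'' m" "m'' \<noteq> m"
proof -
  have keys_pair: "Poly_Mapping.keys (var_pair P P') \<subseteq> Q"
    "Poly_Mapping.keys (var_pair (meet P P') (join P P')) \<subseteq> Q"
    using keys_var_pair incomparable_pairsD[OF PP'] meet_join by blast+
  show "Poly_Mapping.keys m'' \<subseteq> Q"
    unfolding m''_def using keys_pair(2) c keys_add[of "var_pair (meet P P') (join P P')" c] by blast
  show "cut_exp m'' = cut_exp m"
    unfolding m_def m''_def cut_exp_add cut_exp_meet_join[OF incomparable_pairsD(1,2)[OF PP']] ..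
  show "monom_le m'' m"
    unfolding m_def m''_def
    using monomial_order_on_add[OF monomial_order keys_pair(2,1) c meet_join_less(1)[OF PP']] .
  show "m'' \<noteq> m"
    unfolding m_def m''_def using meet_join_less(2)[OF PP'] by simp
qed

text \<open>Rewriting by Hibi relations strictly decreases a monomial without changing its image and
  stops only at a chain, which is unique in its fibre; so a chain is the least monomial of its fibre.\<close>

lemma cut_chain_least:
  assumes m: "Poly_Mapping.keys m \<subseteq> Q" "cut_chain m"
  shows "Poly_Mapping.keys m' \<subseteq> Q \<Longrightarrow> cut_exp m' = cut_exp m \<Longrightarrow> monom_le m m'"
proof (induction m' rule: wf_induct_rule[OF monomial_order_on_wf[OF monomial_order]])
  case (1 m')
  show ?case
  proof (cases "cut_chain m'")
    case True
    have "m' = m" using cut_chain_unique[OF "1.prems"(1) m(1) True m(2) "1.prems"(2)] .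
    then show ?thesis by (simp add: weight_lex_le_refl)
  next
    case False
    then obtain P P' where PP': "(P, P') \<in> incomparable_pairs"
      and dec: "m' = var_pair P P' + (m' - var_pair P P')"
      using not_cut_chain_divisible[OF "1.prems"(1)] by blast
    define c where "c = m' - var_pair P P'"
    define m'' where "m'' = var_pair (meet P P') (join P P') + c"
    have m'_eq: "m' = var_pair P P' + c" using dec unfolding c_def .
    have keys_c: "Poly_Mapping.keys c \<subseteq> Q"
      unfolding c_def using keys_diff_subset "1.prems"(1) by (rule order_trans)
    have m'': "Poly_Mapping.keys m'' \<subseteq> Q" "cut_exp m'' = cut_exp m'" "monom_le m'' m'" "m'' \<noteq> m'"
      unfolding m''_def m'_eq by (rule hibi_rewrite[OF PP' keys_c])+
    then have "(m'', m') \<in> {(a, b). Poly_Mapping.keys a \<subseteq> Q \<and> Poly_Mapping.keys b \<subseteq> Q \<and> monom_le a b \<and> a \<noteq> b}"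
      using "1.prems"(1) by simp
    then have "monom_le m m''" using "1.IH" m''(1,2) "1.prems"(2) by simp
    then show ?thesis
      using monomial_order_on_trans[OF monomial_order m(1) m''(1) "1.prems"(1)] m''(3) by simp
  qed
qed

text \<open>A leading monomial of the cut ideal cannot be a chain: a chain is the unique least monomial
  of its fibre, so its coefficient would survive in the image.\<close>

lemma lead_monom_cut_ideal_divisible:
  assumes f: "(f :: ('a set set, 'k::comm_ring_1) mpoly) \<in> cut_ideal V E" "f \<noteq> 0"
  obtains P P' where "(P, P') \<in> incomparable_pairs"
    "lead_monom monom_le f = var_pair P P' + (lead_monom monom_le f - var_pair P P')"
proof -
  have f_ring: "f \<in> poly_ring Q" and f_kernel: "cut_hom E f = 0"
    using f(1) unfolding cut_ideal_def by auto
  define m where "m = lead_monom monom_le f"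
  have m: "m \<in> Poly_Mapping.keys f" "\<And>m'. m' \<in> Poly_Mapping.keys f \<Longrightarrow> monom_le m' m"
    using lead_monom_greatest[OF monomial_order f_ring f(2)] unfolding m_def by blast+
  have keys: "Poly_Mapping.keys m' \<subseteq> Q" if "m' \<in> Poly_Mapping.keys f" for m'
    using f_ring that unfolding poly_ring_def by blast
  have "cut_chain m \<Longrightarrow> False"
  proof -
    assume chain: "cut_chain m"
    have unique: "m' = m" if "m' \<in> Poly_Mapping.keys f"
      "cut_exponent E (Poly_Mapping.keys m') m' = cut_exponent E (Poly_Mapping.keys m) m" for m'
    proof -
      have "cut_exp m' = cut_exp m"
        using that(2) cut_exponent_keys[OF finite_Q keys[OF that(1)]] cut_exponent_keys[OF finite_Q keys[OF m(1)]]
        by simp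
      then have "monom_le m m'" using cut_chain_least[OF keys[OF m(1)] chain keys[OF that(1)]] by blast
      then show "m' = m"
        using monomial_order_on_antisym[OF monomial_order keys[OF that(1)] keys[OF m(1)]] m(2) that(1) by blast
    qed
    have "Poly_Mapping.lookup (cut_hom E f) (cut_exponent E (Poly_Mapping.keys m) m) =
          (\<Sum>m'\<in>Poly_Mapping.keys f. if m' = m then Poly_Mapping.lookup f m' else 0)"
      unfolding lookup_cut_hom by (rule sum.cong) (auto dest: unique)
    also have "\<dots> = Poly_Mapping.lookup f m" using m(1) by simp
    finally show False using f_kernel m(1) by (simp add: in_keys_iff)
  qed
  then show ?thesis
    using not_cut_chain_divisible[OF keys[OF m(1)]] that unfolding m_def by blast
qed

lemma groebner_basis_hibi_binomials:
  "groebner_basis monom_le (hibi_binomials :: ('a set set, 'k::comm_ring_1) mpoly set) (cut_ideal V E)"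
proof -
  let ?I = "cut_ideal V E :: ('a set set, 'k) mpoly set"
  let ?L = "{monom (lead_monom monom_le g) | g. g \<in> (hibi_binomials :: ('a set set, 'k) mpoly set) \<and> g \<noteq> 0}"
  let ?T = "{monom (lead_monom monom_le f) | f. f \<in> ?I \<and> f \<noteq> 0}"
  have G_subset: "hibi_binomials \<subseteq> ?I"
    unfolding hibi_binomials_def using hibi_binomial_in_cut_ideal by auto
  have "?T \<subseteq> ideal_gen ?L"
  proof clarify
    fix f :: "('a set set, 'k) mpoly" assume f: "f \<in> ?I" "f \<noteq> 0"
    then obtain P P' where PP': "(P, P') \<in> incomparable_pairs"
      and lead: "lead_monom monom_le f = var_pair P P' + (lead_monom monom_le f - var_pair P P')"
      by (rule lead_monom_cut_ideal_divisible)
    have "hibi_binomial (P, P') \<in> (hibi_binomials :: ('a set set, 'k) mpoly set)"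
      unfolding hibi_binomials_def using PP' by blast
    moreover have "(hibi_binomial (P, P') :: ('a set set, 'k) mpoly) \<noteq> 0"
      unfolding hibi_binomial_def prod.case using meet_join_less(2)[OF PP']
      by (intro monom_diff_nonzero) simp
    ultimately have "monom (lead_monom monom_le (hibi_binomial (P, P') :: ('a set set, 'k) mpoly)) \<in> ?L"
      by blast
    then have "monom (var_pair P P') \<in> ?L" by (simp only: lead_monom_hibi_binomial[OF PP'])
    then have "monom (lead_monom monom_le f - var_pair P P') * monom (var_pair P P') \<in> ideal_gen ?L"
      by (rule ideal_gen_mult_mem)
    then show "monom (lead_monom monom_le f) \<in> ideal_gen ?L"
      by (subst lead) (simp add: monom_add mult.commute)
  qed
  then have "ideal_gen ?T \<subseteq> ideal_gen ?L" by (rule ideal_gen_subset)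
  moreover have "ideal_gen ?L \<subseteq> ideal_gen ?T" using G_subset by (intro ideal_gen_mono) blast
  moreover have "finite (hibi_binomials :: ('a set set, 'k) mpoly set)"
  proof -
    have "incomparable_pairs \<subseteq> Q \<times> Q" unfolding incomparable_pairs_def by auto
    then show ?thesis unfolding hibi_binomials_def using finite_Q finite_subset by blast
  qed
  ultimately show ?thesis
    unfolding groebner_basis_def initial_ideal_def using G_subset by blast
qed

lemma quadratic_squarefree_hibi_binomials:
  "quadratic_squarefree_binomials (hibi_binomials :: ('a set set, 'k::comm_ring_1) mpoly set)"
  unfolding quadratic_squarefree_binomials_def hibi_binomials_def
proof clarify
  fix P P' assume PP': "(P, P') \<in> incomparable_pairs"
  have "P \<noteq> P'" "meet P P' \<noteq> join P P'" using incomparable_pairsD[OF PP'] by simp_all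
  moreover have "var_pair P P' \<noteq> var_pair (meet P P') (join P P')" using meet_join_less(2)[OF PP'] by simp
  ultimately show "\<exists>u v. u \<noteq> v \<and> squarefree_monomial u \<and> squarefree_monomial v \<and>
      monomial_degree u = 2 \<and> monomial_degree v = 2 \<and>
      (hibi_binomial (P, P') :: ('a set set, 'k) mpoly) = monom u - monom v"
    unfolding hibi_binomial_def
    by (intro exI[of _ "var_pair P P'"] exI[of _ "var_pair (meet P P') (join P P')"] conjI)
      (simp_all add: squarefree_var_pair degree_var_pair)
qed

lemma squarefree_initial_cut_ideal:
  "squarefree_monomial_ideal (initial_ideal monom_le (cut_ideal V E :: ('a set set, 'k::comm_ring_1) mpoly set))"
  unfolding squarefree_monomial_ideal_def
proof (intro exI conjI)
  let ?S = "{lead_monom monom_le g | g. g \<in> (hibi_binomials :: ('a set set, 'k) mpoly set) \<and> g \<noteq> 0}"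
  show "\<forall>m\<in>?S. squarefree_monomial m"
  proof
    fix m assume "m \<in> ?S"
    then obtain P P' where PP': "(P, P') \<in> incomparable_pairs"
      and m: "m = lead_monom monom_le (hibi_binomial (P, P') :: ('a set set, 'k) mpoly)"
      unfolding hibi_binomials_def by auto
    show "squarefree_monomial m"
      unfolding m lead_monom_hibi_binomial[OF PP']
      using squarefree_var_pair incomparable_pairsD(3)[OF PP'] by simp
  qed
  have S: "monom ` ?S = {monom (lead_monom monom_le g) | g. g \<in> (hibi_binomials :: ('a set set, 'k) mpoly set) \<and> g \<noteq> 0}"
    by auto
  have "ideal_gen {monom (lead_monom monom_le g) | g. g \<in> (hibi_binomials :: ('a set set, 'k) mpoly set) \<and> g \<noteq> 0}
      = initial_ideal monom_le (cut_ideal V E :: ('a set set, 'k) mpoly set)"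
    using groebner_basis_hibi_binomials unfolding groebner_basis_def by (elim conjE)
  then show "initial_ideal monom_le (cut_ideal V E :: ('a set set, 'k) mpoly set) = ideal_gen (monom ` ?S)"
    unfolding S by (rule sym)
qed

end

theorem corollary4p3:
  fixes V :: "'a set" and E :: "'a set set"
  assumes "is_tree V E" and "card E \<ge> 2"
  shows "\<exists>le G. monomial_order_on (unordered_partitions V) le \<and>
           groebner_basis le G (cut_ideal V E :: ('a set set, 'k::field) mpoly set) \<and>
           quadratic_squarefree_binomials G \<and>
           squarefree_monomial_ideal (initial_ideal le (cut_ideal V E :: ('a set set, 'k) mpoly set))"
proof -
  interpret tree_cut_ideal V E
    using assms by unfold_locales auto
  show ?thesis
    using monomial_order groebner_basis_hibi_binomials quadratic_squarefree_hibi_binomials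
      squarefree_initial_cut_ideal by blast
qed

end
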